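(* Let $G$ be a connected graph on $N\ge 2$ vertices and let its vertex set be partitioned into two non-empty parts, one held by Alice and one held by Bob. Let $\rho_2$ be a two-qubit state shared between Alice and Bob. Suppose that from sufficiently many copies of $\rho_2$, Alice and Bob can produce, by stochastic local operations and classical communication (SLOCC) with respect to the Alice/Bob split (using additional local ancilla qubits if needed), the noisy $N$-qubit graph state $\rho_G$, where Alice holds the qubits of her part and Bob the qubits of his. If $\rho_2$ cannot be purified (distilled) to a maximally entangled two-qubit state, then $\rho_G$ cannot be purified to the pure graph state $|\psi_G\rangle$ by any protocol.
   Context: For a graph $G$ with vertices $V_G$ and edges $E_G$, attach a qubit to each vertex. The graph state $|\psi_G\rangle$ is the unique common $+1$ eigenstate of the stabilizers $K_i=X_i\prod_{\{i,j\}\in E_G}Z_j$, $i\in V_G$; equivalently, it is obtained by preparing every qubit in $|+\rangle=(|0\rangle+|1\rangle)/\sqrt2$ and applying a controlled-phase gate along every edge. The states $Z_j|\psi_G\rangle$, $j\in\{0,1\}^N$ (where $Z_j$ applies $Z$ to the qubits indicated by $j$) form an orthonormal basis, the graph-state basis. A noisy graph state is a mixed state $\rho_G=\sum_j\lambda_j Z_j|\psi_G\rangle\langle\psi_G|Z_j$. Purification of an $N$-qubit state $\rho$ to a pure target $|\psi\rangle$ means: each qubit is held by a different party, each party holds the corresponding qubit of every one of arbitrarily many copies of $\rho$, and the parties, restricted to (perfect) SLOCC, produce at least one copy of $|\psi\rangle$ with fidelity arbitrarily close to 1. Purification of a two-qubit state means purification to a maximally entangled (Bell) state. *)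

theory Defs
  imports Complex_Main
begin

(* Multi-qubit systems: qubits carry labels of type 'q; a computational basis
   state of the qubits in Q is a function a :: 'q => bool vanishing outside Q. *)
definition basis :: "'q set \<Rightarrow> ('q \<Rightarrow> bool) set" where
  "basis Q = {a. \<forall>x. a x \<longrightarrow> x \<in> Q}"

definition restr :: "('q \<Rightarrow> bool) \<Rightarrow> 'q set \<Rightarrow> ('q \<Rightarrow> bool)" where
  "restr a S = (\<lambda>x. x \<in> S \<and> a x)"

type_synonym 'q qop = "('q \<Rightarrow> bool) \<Rightarrow> ('q \<Rightarrow> bool) \<Rightarrow> complex"

definition trace :: "'q set \<Rightarrow> 'q qop \<Rightarrow> complex" where
  "trace Q \<rho> = (\<Sum>a\<in>basis Q. \<rho> a a)"

definition density :: "'q set \<Rightarrow> 'q qop \<Rightarrow> bool" where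
  "density Q \<rho> \<longleftrightarrow>
     (\<forall>a b. a \<notin> basis Q \<or> b \<notin> basis Q \<longrightarrow> \<rho> a b = 0) \<and>
     (\<forall>a b. \<rho> b a = cnj (\<rho> a b)) \<and>
     (\<forall>v. 0 \<le> Re (\<Sum>a\<in>basis Q. \<Sum>b\<in>basis Q. cnj (v a) * \<rho> a b * v b)) \<and>
     trace Q \<rho> = 1"

(* n copies of a state on Q; qubit q of copy c carries label (c,q) *)
definition copies :: "nat \<Rightarrow> 'q set \<Rightarrow> 'q qop \<Rightarrow> (nat \<times> 'q) qop" where
  "copies n Q \<rho> a b =
     (if a \<in> basis ({..<n} \<times> Q) \<and> b \<in> basis ({..<n} \<times> Q)
      then (\<Prod>c<n. \<rho> (\<lambda>q. a (c, q)) (\<lambda>q. b (c, q))) else 0)"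

(* product Kraus operator: party p applies an arbitrary linear map from its
   input qubits In p to its output qubits Out p (covers local ancillas,
   local measurements/postselection and discarding qubits) *)
definition kraus_prod ::
  "'p set \<Rightarrow> ('p \<Rightarrow> 'q set) \<Rightarrow> ('p \<Rightarrow> 'r set) \<Rightarrow>
   ('p \<Rightarrow> ('r \<Rightarrow> bool) \<Rightarrow> ('q \<Rightarrow> bool) \<Rightarrow> complex) \<Rightarrow>
   ('r \<Rightarrow> bool) \<Rightarrow> ('q \<Rightarrow> bool) \<Rightarrow> complex" where
  "kraus_prod P In Out A b a = (\<Prod>p\<in>P. A p (restr b (Out p)) (restr a (In p)))"

definition slocc_apply ::
  "'p set \<Rightarrow> ('p \<Rightarrow> 'q set) \<Rightarrow> ('p \<Rightarrow> 'r set) \<Rightarrow>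
   (nat \<Rightarrow> 'p \<Rightarrow> ('r \<Rightarrow> bool) \<Rightarrow> ('q \<Rightarrow> bool) \<Rightarrow> complex) \<Rightarrow> nat \<Rightarrow>
   'q qop \<Rightarrow> 'r qop" where
  "slocc_apply P In Out K m \<rho> b b' =
     (\<Sum>k<m. \<Sum>a\<in>basis (\<Union>(In ` P)). \<Sum>a'\<in>basis (\<Union>(In ` P)).
        kraus_prod P In Out (K k) b a * \<rho> a a' * cnj (kraus_prod P In Out (K k) b' a'))"

(* SLOCC conversion (perfect, i.e. exact, with nonzero success probability):
   parties P, party p holds input qubits In p and output qubits Out p *)
definition slocc_converts ::
  "'p set \<Rightarrow> ('p \<Rightarrow> 'q set) \<Rightarrow> ('p \<Rightarrow> 'r set) \<Rightarrow> 'q qop \<Rightarrow> 'r qop \<Rightarrow> bool" where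
  "slocc_converts P In Out \<rho> \<sigma> \<longleftrightarrow>
     finite P \<and> (\<forall>p\<in>P. finite (In p) \<and> finite (Out p)) \<and>
     (\<forall>p\<in>P. \<forall>p'\<in>P. p \<noteq> p' \<longrightarrow> In p \<inter> In p' = {} \<and> Out p \<inter> Out p' = {}) \<and>
     (\<exists>m K. trace (\<Union>(Out ` P)) (slocc_apply P In Out K m \<rho>) \<noteq> 0 \<and>
        (\<forall>b b'. \<sigma> b b' =
           (if b \<in> basis (\<Union>(Out ` P)) \<and> b' \<in> basis (\<Union>(Out ` P))
            then slocc_apply P In Out K m \<rho> b b' / trace (\<Union>(Out ` P)) (slocc_apply P In Out K m \<rho>)
            else 0)))"

definition fidelity :: "'q set \<Rightarrow> (('q \<Rightarrow> bool) \<Rightarrow> complex) \<Rightarrow> 'q qop \<Rightarrow> real" where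
  "fidelity Q \<psi> \<sigma> = Re (\<Sum>a\<in>basis Q. \<Sum>b\<in>basis Q. cnj (\<psi> a) * \<sigma> a b * \<psi> b)"

(* purification of a state on the qubits Q (each qubit its own party, which
   holds that qubit of every copy) to the pure state psi *)
definition purifiable :: "'q set \<Rightarrow> 'q qop \<Rightarrow> (('q \<Rightarrow> bool) \<Rightarrow> complex) \<Rightarrow> bool" where
  "purifiable Q \<rho> \<psi> \<longleftrightarrow>
     (\<forall>\<epsilon>>0. \<exists>n \<sigma>. slocc_converts Q (\<lambda>q. {..<n} \<times> {q}) (\<lambda>q. {q}) (copies n Q \<rho>) \<sigma>
                   \<and> fidelity Q \<psi> \<sigma> \<ge> 1 - \<epsilon>)"

definition simple_graph :: "nat set \<Rightarrow> (nat \<Rightarrow> nat \<Rightarrow> bool) \<Rightarrow> bool" where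
  "simple_graph V E \<longleftrightarrow> (\<forall>i j. E i j \<longrightarrow> i \<in> V \<and> j \<in> V \<and> i \<noteq> j \<and> E j i)"

definition graph_connected :: "nat set \<Rightarrow> (nat \<Rightarrow> nat \<Rightarrow> bool) \<Rightarrow> bool" where
  "graph_connected V E \<longleftrightarrow> (\<forall>i\<in>V. \<forall>j\<in>V. E\<^sup>*\<^sup>* i j)"

(* graph state |psi_G> = prod_{edges} CZ |+>^V *)
definition graph_state :: "nat set \<Rightarrow> (nat \<Rightarrow> nat \<Rightarrow> bool) \<Rightarrow> (nat \<Rightarrow> bool) \<Rightarrow> complex" where
  "graph_state V E a =
     (if a \<in> basis V
      then complex_of_real ((-1) ^ card {(i, j). i \<in> V \<and> j \<in> V \<and> i < j \<and> E i j \<and> a i \<and> a j}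
                             / sqrt (2 ^ card V))
      else 0)"

definition zgraph_state :: "nat set \<Rightarrow> (nat \<Rightarrow> nat \<Rightarrow> bool) \<Rightarrow> (nat \<Rightarrow> bool) \<Rightarrow> (nat \<Rightarrow> bool) \<Rightarrow> complex" where
  "zgraph_state V E j a = (-1) ^ card {i\<in>V. j i \<and> a i} * graph_state V E a"

definition noisy_graph_state ::
  "nat set \<Rightarrow> (nat \<Rightarrow> nat \<Rightarrow> bool) \<Rightarrow> ((nat \<Rightarrow> bool) \<Rightarrow> real) \<Rightarrow> nat qop" where
  "noisy_graph_state V E lam a b =
     (\<Sum>j\<in>basis V. complex_of_real (lam j) * zgraph_state V E j a * cnj (zgraph_state V E j b))"

datatype party = Alice | Bob

lemma UNIV_party: "(UNIV :: party set) = {Alice, Bob}"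
  using party.exhaust by blast

definition bell :: "(party \<Rightarrow> bool) \<Rightarrow> complex" where
  "bell a = (if a Alice = a Bob then complex_of_real (1 / sqrt 2) else 0)"

end

theory Submission
  imports Defs "HOL-Library.FuncSet"
begin

(* Copies of rho2 yield rho_G by a map that is separable for the Alice/Bob cut, hence n * m
   copies yield n copies of rho_G; a purification protocol for rho_G acts locally on every vertex,
   so it is separable for the cut as well.  Since G is connected, some edge {u, v} crosses the
   cut.  Measuring all other vertices in the computational basis and applying local corrections
   on u and v is a trace-preserving separable map that takes the graph state to the Bell state;
   by Cauchy-Schwarz for the positive form of a state, the Bell fidelity of the image of any state
   is at least its fidelity with the graph state.  Composing the three maps would therefore
   purify rho2. *)

lemma bij_betw_Pow_basis: "bij_betw (\<lambda>A x. x \<in> A) (Pow Q) (basis Q)"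
proof (rule bij_betw_byWitness[where f' = "\<lambda>a. {x. a x}"])
  show "\<forall>a\<in>basis Q. (\<lambda>x. x \<in> {x. a x}) = a" by simp
qed (auto simp: basis_def)

lemma finite_basis: "finite Q \<Longrightarrow> finite (basis Q)"
  using bij_betw_finite[OF bij_betw_Pow_basis[of Q]] by simp

lemma card_basis: "finite Q \<Longrightarrow> card (basis Q) = 2 ^ card Q"
  using bij_betw_same_card[OF bij_betw_Pow_basis, of Q] by (simp add: card_Pow)

lemma basis_UNIV [simp]: "basis UNIV = UNIV"
  by (auto simp: basis_def)

lemma restr_in_basis: "restr a S \<in> basis S"
  by (auto simp: restr_def basis_def)

lemma restr_restr_subset: "X \<subseteq> Y \<Longrightarrow> restr (restr a Y) X = restr a X"
  by (auto simp: restr_def fun_eq_iff)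

lemma sum_swap_pair:
  "(\<Sum>a\<in>A. \<Sum>a'\<in>A'. \<Sum>k\<in>K. f a a' k) = (\<Sum>k\<in>K. \<Sum>a\<in>A. \<Sum>a'\<in>A'. (f a a' k :: 'b::comm_monoid_add))"
  by (rule trans[OF sum.cong[OF refl sum.swap] sum.swap])

lemma sum_swap_pair_pair:
  "(\<Sum>k\<in>K. \<Sum>k'\<in>K'. \<Sum>a\<in>A. \<Sum>a'\<in>A'. f k k' a a') =
   (\<Sum>a\<in>A. \<Sum>a'\<in>A'. \<Sum>k\<in>K. \<Sum>k'\<in>K'. (f k k' a a' :: 'b::comm_monoid_add))"
  by (rule trans[OF sum.cong[OF refl sum_swap_pair[symmetric]] sum_swap_pair[symmetric]])

section \<open>Kraus maps\<close>

definition sandwich :: "'q set \<Rightarrow> (('r \<Rightarrow> bool) \<Rightarrow> ('q \<Rightarrow> bool) \<Rightarrow> complex) \<Rightarrow> 'q qop \<Rightarrow> 'r qop" where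
  "sandwich Q K \<rho> b b' = (\<Sum>a\<in>basis Q. \<Sum>a'\<in>basis Q. K b a * \<rho> a a' * cnj (K b' a'))"

definition kraus_map ::
  "'i set \<Rightarrow> 'q set \<Rightarrow> ('i \<Rightarrow> ('r \<Rightarrow> bool) \<Rightarrow> ('q \<Rightarrow> bool) \<Rightarrow> complex) \<Rightarrow> 'q qop \<Rightarrow> 'r qop" where
  "kraus_map I Q K \<rho> b b' = (\<Sum>k\<in>I. sandwich Q (K k) \<rho> b b')"

definition op_mult ::
  "'m set \<Rightarrow> (('r \<Rightarrow> bool) \<Rightarrow> ('m \<Rightarrow> bool) \<Rightarrow> complex) \<Rightarrow> (('m \<Rightarrow> bool) \<Rightarrow> ('q \<Rightarrow> bool) \<Rightarrow> complex)
   \<Rightarrow> ('r \<Rightarrow> bool) \<Rightarrow> ('q \<Rightarrow> bool) \<Rightarrow> complex" where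
  "op_mult M K2 K1 b a = (\<Sum>x\<in>basis M. K2 b x * K1 x a)"

lemma sandwich_sandwich: "sandwich M K2 (sandwich Q K1 \<rho>) = sandwich Q (op_mult M K2 K1) \<rho>"
proof (intro ext)
  fix b b'
  have "sandwich M K2 (sandwich Q K1 \<rho>) b b' =
    (\<Sum>x\<in>basis M. \<Sum>x'\<in>basis M. \<Sum>a\<in>basis Q. \<Sum>a'\<in>basis Q.
        (K2 b x * K1 x a) * \<rho> a a' * cnj (K2 b' x' * K1 x' a'))"
    unfolding sandwich_def sum_distrib_left sum_distrib_right
    by (rule sum.cong[OF refl])+ (simp add: mult_ac)
  also have "\<dots> = (\<Sum>a\<in>basis Q. \<Sum>a'\<in>basis Q. \<Sum>x\<in>basis M. \<Sum>x'\<in>basis M.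
        (K2 b x * K1 x a) * \<rho> a a' * cnj (K2 b' x' * K1 x' a'))"
    by (rule sum_swap_pair_pair)
  also have "\<dots> = sandwich Q (op_mult M K2 K1) \<rho> b b'"
    unfolding sandwich_def op_mult_def sum_distrib_left sum_distrib_right cnj_sum
    by (rule sum.cong[OF refl], rule sum.cong[OF refl], rule sum.swap)
  finally show "sandwich M K2 (sandwich Q K1 \<rho>) b b' = sandwich Q (op_mult M K2 K1) \<rho> b b'" .
qed

lemma sandwich_sum: "sandwich Q K (\<lambda>a a'. \<Sum>k\<in>I. F k a a') b b' = (\<Sum>k\<in>I. sandwich Q K (F k) b b')"
  unfolding sandwich_def sum_distrib_left sum_distrib_right by (rule sum_swap_pair)

lemma kraus_map_kraus_map:
  "kraus_map I2 M K2 (kraus_map I1 Q K1 \<rho>) =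
    kraus_map (I2 \<times> I1) Q (\<lambda>(k2, k1). op_mult M (K2 k2) (K1 k1)) \<rho>"
proof (intro ext)
  fix b b'
  have "kraus_map I2 M K2 (kraus_map I1 Q K1 \<rho>) b b' =
    (\<Sum>k2\<in>I2. \<Sum>k1\<in>I1. sandwich M (K2 k2) (sandwich Q (K1 k1) \<rho>) b b')"
    unfolding kraus_map_def sandwich_sum ..
  then show "kraus_map I2 M K2 (kraus_map I1 Q K1 \<rho>) b b' =
      kraus_map (I2 \<times> I1) Q (\<lambda>(k2, k1). op_mult M (K2 k2) (K1 k1)) \<rho> b b'"
    unfolding sandwich_sandwich kraus_map_def sum.cartesian_product by (simp add: split_def)
qed

lemma kraus_map_cong:
  assumes "\<And>a a'. a \<in> basis Q \<Longrightarrow> a' \<in> basis Q \<Longrightarrow> \<rho> a a' = \<sigma> a a'"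
  shows "kraus_map I Q K \<rho> = kraus_map I Q K \<sigma>"
  unfolding kraus_map_def sandwich_def by (intro ext, (rule sum.cong[OF refl])+) (simp add: assms)

lemma kraus_map_scale: "kraus_map I Q K (\<lambda>a a'. c * \<rho> a a') b b' = c * kraus_map I Q K \<rho> b b'"
  unfolding kraus_map_def sandwich_def sum_distrib_left by (rule sum.cong[OF refl])+ (simp add: mult_ac)

section \<open>Positive semidefinite forms\<close>

definition sesq :: "'q set \<Rightarrow> 'q qop \<Rightarrow> (('q \<Rightarrow> bool) \<Rightarrow> complex) \<Rightarrow> (('q \<Rightarrow> bool) \<Rightarrow> complex) \<Rightarrow> complex" where
  "sesq Q M f g = (\<Sum>a\<in>basis Q. \<Sum>b\<in>basis Q. cnj (f a) * M a b * g b)"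

abbreviation quad :: "'q set \<Rightarrow> 'q qop \<Rightarrow> (('q \<Rightarrow> bool) \<Rightarrow> complex) \<Rightarrow> complex" where
  "quad Q M v \<equiv> sesq Q M v v"

definition psd :: "'q set \<Rightarrow> 'q qop \<Rightarrow> bool" where
  "psd Q M \<longleftrightarrow> (\<forall>v. Im (quad Q M v) = 0 \<and> Re (quad Q M v) \<ge> 0)"

lemma sesq_cong:
  assumes "\<And>a. a \<in> basis Q \<Longrightarrow> f a = f' a" "\<And>a. a \<in> basis Q \<Longrightarrow> g a = g' a"
  shows "sesq Q M f g = sesq Q M f' g'"
  unfolding sesq_def by (rule sum.cong[OF refl])+ (simp add: assms)

lemma sesq_sum_op: "sesq R (\<lambda>b b'. \<Sum>k\<in>I. F k b b') f g = (\<Sum>k\<in>I. sesq R (F k) f g)"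
  unfolding sesq_def sum_distrib_left sum_distrib_right by (rule sum_swap_pair)

lemma sesq_sum_left: "sesq Q M (\<lambda>a. \<Sum>x\<in>X. f x a) g = (\<Sum>x\<in>X. sesq Q M (f x) g)"
  unfolding sesq_def cnj_sum sum_distrib_right by (subst sum_swap_pair) simp

lemma sesq_sum_right: "sesq Q M f (\<lambda>a. \<Sum>x\<in>X. g x a) = (\<Sum>x\<in>X. sesq Q M f (g x))"
  unfolding sesq_def sum_distrib_left by (subst sum_swap_pair) simp

lemma quad_scale: "quad Q M (\<lambda>a. c * f a) = cnj c * c * quad Q M f"
  unfolding sesq_def sum_distrib_left by (rule sum.cong[OF refl])+ (simp add: mult_ac)

lemma quad_diff: "quad Q M (\<lambda>a. f a - g a) = quad Q M f - sesq Q M f g - sesq Q M g f + quad Q M g"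
proof -
  have "quad Q M (\<lambda>a. f a - g a) = (\<Sum>a\<in>basis Q. \<Sum>b\<in>basis Q.
     cnj (f a) * M a b * f b - cnj (f a) * M a b * g b
       - cnj (g a) * M a b * f b + cnj (g a) * M a b * g b)"
    unfolding sesq_def by (rule sum.cong[OF refl])+ (simp add: algebra_simps)
  then show ?thesis unfolding sesq_def by (simp only: sum.distrib sum_subtractf)
qed

lemma quad_indicator:
  assumes "finite Q" "a \<in> basis Q"
  shows "quad Q M (\<lambda>z. if z = a then 1 else 0) = M a a"
proof -
  have "quad Q M (\<lambda>z. if z = a then 1 else 0) = (\<Sum>x\<in>basis Q. if x = a then M x a else 0)"
    unfolding sesq_def
  proof (rule sum.cong[OF refl])
    fix x
    have "\<And>y::complex. \<And>P. y * (if P then 1 else 0) = (if P then y else 0)" by simp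
    then show "(\<Sum>b\<in>basis Q. cnj (if x = a then 1 else 0) * M x b * (if b = a then 1 else 0)) =
        (if x = a then M x a else 0)"
      using assms by (simp add: finite_basis)
  qed
  also have "\<dots> = M a a" using assms by (simp add: finite_basis)
  finally show ?thesis .
qed

lemma quad_sandwich: "quad R (sandwich Q K \<rho>) v = quad Q \<rho> (\<lambda>a. \<Sum>b\<in>basis R. cnj (K b a) * v b)"
proof -
  have "quad R (sandwich Q K \<rho>) v = (\<Sum>b\<in>basis R. \<Sum>b'\<in>basis R. \<Sum>a\<in>basis Q. \<Sum>a'\<in>basis Q.
           (K b a * cnj (v b)) * \<rho> a a' * (cnj (K b' a') * v b'))"
    unfolding sesq_def sandwich_def sum_distrib_left sum_distrib_right
    by (rule sum.cong[OF refl])+ (simp add: mult_ac)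
  also have "\<dots> = (\<Sum>b'\<in>basis R. \<Sum>b\<in>basis R. \<Sum>a\<in>basis Q. \<Sum>a'\<in>basis Q.
           (K b a * cnj (v b)) * \<rho> a a' * (cnj (K b' a') * v b'))"
    by (rule sum.swap)
  also have "\<dots> = (\<Sum>a\<in>basis Q. \<Sum>a'\<in>basis Q. \<Sum>b'\<in>basis R. \<Sum>b\<in>basis R.
           (K b a * cnj (v b)) * \<rho> a a' * (cnj (K b' a') * v b'))"
    by (rule sum_swap_pair_pair)
  also have "\<dots> = quad Q \<rho> (\<lambda>a. \<Sum>b\<in>basis R. cnj (K b a) * v b)"
    unfolding sesq_def cnj_sum sum_distrib_left sum_distrib_right
    by (rule sum.cong[OF refl])+ (simp add: mult_ac)
  finally show ?thesis .
qed

lemma psd_sandwich: "psd Q \<rho> \<Longrightarrow> psd R (sandwich Q K \<rho>)"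
  unfolding psd_def quad_sandwich by blast

lemma psd_kraus_map: "psd Q \<rho> \<Longrightarrow> psd R (kraus_map I Q K \<rho>)"
  using psd_sandwich[of Q \<rho> R]
  unfolding psd_def kraus_map_def sesq_sum_op by (auto simp: Im_sum Re_sum sum_nonneg)

lemma psd_mixture:
  assumes "\<And>j. j \<in> J \<Longrightarrow> w j \<ge> 0"
    and "\<And>a b. a \<in> basis Q \<Longrightarrow> b \<in> basis Q \<Longrightarrow> M a b = (\<Sum>j\<in>J. complex_of_real (w j) * f j a * cnj (f j b))"
  shows "psd Q M"
  unfolding psd_def
proof
  fix v
  define g where "g j = (\<Sum>b\<in>basis Q. cnj (f j b) * v b)" for j
  let ?term = "\<lambda>j a b. complex_of_real (w j) * (cnj (v a) * f j a) * (cnj (f j b) * v b)"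
  have "quad Q M v = (\<Sum>a\<in>basis Q. \<Sum>b\<in>basis Q. \<Sum>j\<in>J. ?term j a b)"
    unfolding sesq_def
  proof (rule sum.cong[OF refl], rule sum.cong[OF refl])
    fix a b assume "a \<in> basis Q" "b \<in> basis Q"
    show "cnj (v a) * M a b * v b = (\<Sum>j\<in>J. ?term j a b)"
      unfolding assms(2)[OF \<open>a \<in> basis Q\<close> \<open>b \<in> basis Q\<close>] sum_distrib_left sum_distrib_right
      by (rule sum.cong[OF refl]) (simp add: mult_ac)
  qed
  also have "\<dots> = (\<Sum>j\<in>J. \<Sum>a\<in>basis Q. \<Sum>b\<in>basis Q. ?term j a b)"
    by (rule sum_swap_pair)
  also have "\<dots> = (\<Sum>j\<in>J. complex_of_real (w j) * (cnj (g j) * g j))"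
  proof (rule sum.cong[OF refl])
    fix j
    have "complex_of_real (w j) * (cnj (g j) * g j) =
        (\<Sum>a\<in>basis Q. \<Sum>b\<in>basis Q.
          complex_of_real (w j) * (cnj (cnj (f j a) * v a) * (cnj (f j b) * v b)))"
      unfolding g_def by (simp only: cnj_sum sum_product) (simp only: sum_distrib_left)
    then show "(\<Sum>a\<in>basis Q. \<Sum>b\<in>basis Q. ?term j a b) = complex_of_real (w j) * (cnj (g j) * g j)"
      by (simp add: mult_ac)
  qed
  also have "\<dots> = complex_of_real (\<Sum>j\<in>J. w j * (cmod (g j))\<^sup>2)"
  proof -
    have "cnj (g j) * g j = complex_of_real ((cmod (g j))\<^sup>2)" for j
      by (simp only: complex_norm_square mult.commute)
    then show ?thesis by (simp add: of_real_sum)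
  qed
  finally show "Im (quad Q M v) = 0 \<and> 0 \<le> Re (quad Q M v)"
    using assms(1) by (simp add: sum_nonneg)
qed

lemma psd_normalize:
  assumes "psd Q W" "finite Q" "trace Q W \<noteq> 0"
    and "\<And>a b. a \<in> basis Q \<Longrightarrow> b \<in> basis Q \<Longrightarrow> \<sigma> a b = W a b / trace Q W"
  shows "psd Q \<sigma>"
proof -
  define t where "t = Re (trace Q W)"
  have "Im (W a a) = 0 \<and> Re (W a a) \<ge> 0" if "a \<in> basis Q" for a
    using assms(1) quad_indicator[OF assms(2) that, of W] unfolding psd_def by metis
  then have "Im (trace Q W) = 0" "t \<ge> 0"
    unfolding trace_def t_def by (auto simp: Im_sum Re_sum intro: sum_nonneg)
  then have tr: "trace Q W = complex_of_real t" and "t > 0"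
    using assms(3) by (auto simp: complex_eq_iff t_def)
  have "quad Q \<sigma> v = quad Q W v / complex_of_real t" for v
    unfolding sesq_def sum_divide_distrib tr[symmetric] by (rule sum.cong[OF refl])+ (simp add: assms(4))
  then show ?thesis
    using assms(1) \<open>t > 0\<close> unfolding psd_def by (simp add: Re_divide_of_real Im_divide_of_real)
qed

lemma quad_sum_le:
  assumes psd: "psd Q \<sigma>"
  shows "Re (quad Q \<sigma> (\<lambda>a. \<Sum>x\<in>X. \<phi> x a)) \<le> real (card X) * (\<Sum>x\<in>X. Re (quad Q \<sigma> (\<phi> x)))"
proof -
  let ?B = "\<lambda>x y. sesq Q \<sigma> (\<phi> x) (\<phi> y)"
  have "0 \<le> (\<Sum>x\<in>X. \<Sum>y\<in>X. Re (quad Q \<sigma> (\<lambda>a. \<phi> x a - \<phi> y a)))"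
    using psd unfolding psd_def by (intro sum_nonneg) auto
  also have "\<dots> = (\<Sum>x\<in>X. \<Sum>y\<in>X. Re (?B x x) + Re (?B y y) - Re (?B x y) - Re (?B y x))"
    unfolding quad_diff by (simp add: algebra_simps)
  also have "\<dots> = 2 * real (card X) * (\<Sum>x\<in>X. Re (?B x x)) - 2 * Re (\<Sum>x\<in>X. \<Sum>y\<in>X. ?B x y)"
  proof -
    have "(\<Sum>x\<in>X. \<Sum>y\<in>X. Re (?B y x)) = (\<Sum>x\<in>X. \<Sum>y\<in>X. Re (?B x y))"
      by (rule sum.swap)
    then show ?thesis
      by (simp add: sum_subtractf sum.distrib sum_distrib_left[symmetric] Re_sum)
  qed
  finally have "Re (\<Sum>x\<in>X. \<Sum>y\<in>X. ?B x y) \<le> real (card X) * (\<Sum>x\<in>X. Re (?B x x))"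
    by simp
  moreover have "quad Q \<sigma> (\<lambda>a. \<Sum>x\<in>X. \<phi> x a) = (\<Sum>x\<in>X. \<Sum>y\<in>X. ?B x y)"
    unfolding sesq_sum_left sesq_sum_right ..
  ultimately show ?thesis by simp
qed

section \<open>Separable maps\<close>

instance party :: finite
  by standard (simp add: UNIV_party)

lemma sum_basis_UN_prod:
  fixes f :: "'p \<Rightarrow> ('q \<Rightarrow> bool) \<Rightarrow> 'c::comm_semiring_1"
  assumes "finite P" "\<forall>p\<in>P. finite (Q p)" "\<forall>p\<in>P. \<forall>p'\<in>P. p \<noteq> p' \<longrightarrow> Q p \<inter> Q p' = {}"
  shows "(\<Sum>x\<in>basis (\<Union>(Q ` P)). \<Prod>p\<in>P. f p (restr x (Q p))) = (\<Prod>p\<in>P. \<Sum>y\<in>basis (Q p). f p y)"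
proof -
  define glue where "glue g = (\<lambda>q. \<exists>p\<in>P. g p q)" for g :: "'p \<Rightarrow> 'q \<Rightarrow> bool"
  have restr_glue: "restr (glue g) (Q p) = g p" if "g \<in> PiE P (\<lambda>p. basis (Q p))" "p \<in> P" for g p
  proof (rule ext)
    fix q
    show "restr (glue g) (Q p) q = g p q"
      using that assms(3) by (force simp: restr_def glue_def basis_def PiE_iff disjoint_iff)
  qed
  have bij: "bij_betw glue (PiE P (\<lambda>p. basis (Q p))) (basis (\<Union>(Q ` P)))"
  proof (rule bij_betw_byWitness[where f' = "\<lambda>x. restrict (\<lambda>p. restr x (Q p)) P"])
    show "\<forall>g\<in>PiE P (\<lambda>p. basis (Q p)). restrict (\<lambda>p. restr (glue g) (Q p)) P = g"
      using restr_glue by (metis (no_types, lifting) PiE_restrict restrict_ext)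
    show "\<forall>x\<in>basis (\<Union>(Q ` P)). glue (restrict (\<lambda>p. restr x (Q p)) P) = x"
      by (auto simp: glue_def restr_def basis_def fun_eq_iff)
  qed (auto simp: glue_def basis_def restr_def PiE_iff)
  have "(\<Prod>p\<in>P. \<Sum>y\<in>basis (Q p). f p y) = (\<Sum>g\<in>PiE P (\<lambda>p. basis (Q p)). \<Prod>p\<in>P. f p (g p))"
    using assms(1,2) by (intro prod_sum_PiE) (auto simp: finite_basis)
  also have "\<dots> = (\<Sum>g\<in>PiE P (\<lambda>p. basis (Q p)). \<Prod>p\<in>P. f p (restr (glue g) (Q p)))"
    by (rule sum.cong[OF refl], rule prod.cong[OF refl]) (simp add: restr_glue)
  also have "\<dots> = (\<Sum>x\<in>basis (\<Union>(Q ` P)). \<Prod>p\<in>P. f p (restr x (Q p)))"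
    by (rule sum.reindex_bij_betw[OF bij])
  finally show ?thesis ..
qed

lemma op_mult_kraus_prod:
  assumes "finite P" "\<forall>p\<in>P. finite (Mid p)" "\<forall>p\<in>P. \<forall>p'\<in>P. p \<noteq> p' \<longrightarrow> Mid p \<inter> Mid p' = {}"
  shows "op_mult (\<Union>(Mid ` P)) (kraus_prod P Mid Out A2) (kraus_prod P In Mid A1) =
    kraus_prod P In Out (\<lambda>p b a. \<Sum>y\<in>basis (Mid p). A2 p b y * A1 p y a)"
proof (intro ext)
  fix b a
  show "op_mult (\<Union>(Mid ` P)) (kraus_prod P Mid Out A2) (kraus_prod P In Mid A1) b a =
      kraus_prod P In Out (\<lambda>p b a. \<Sum>y\<in>basis (Mid p). A2 p b y * A1 p y a) b a"
    unfolding op_mult_def kraus_prod_def prod.distrib[symmetric]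
    by (rule sum_basis_UN_prod[OF assms])
qed

definition separable_map :: "('p \<Rightarrow> 'q set) \<Rightarrow> ('p \<Rightarrow> 'r set) \<Rightarrow> ('q qop \<Rightarrow> 'r qop) \<Rightarrow> bool" where
  "separable_map In Out \<Phi> \<longleftrightarrow> (\<exists>m K. \<Phi> = slocc_apply UNIV In Out K m)"

lemma slocc_apply_eq_kraus_map:
  "slocc_apply P In Out K m = kraus_map {..<m} (\<Union>(In ` P)) (\<lambda>k. kraus_prod P In Out (K k))"
  by (intro ext) (simp add: slocc_apply_def kraus_map_def sandwich_def)

lemma separable_map_kraus_map:
  assumes "finite I"
  shows "separable_map In Out (kraus_map I (\<Union>(range In)) (\<lambda>i. kraus_prod UNIV In Out (A i)))"
proof -
  obtain g where g: "bij_betw g {..<card I} I"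
    using ex_bij_betw_nat_finite[OF assms] atLeast0LessThan by auto
  have "kraus_map I (\<Union>(range In)) (\<lambda>i. kraus_prod UNIV In Out (A i)) =
      slocc_apply UNIV In Out (\<lambda>k. A (g k)) (card I)"
    unfolding slocc_apply_eq_kraus_map kraus_map_def
    by (intro ext) (rule sum.reindex_bij_betw[OF g, symmetric])
  then show ?thesis unfolding separable_map_def by blast
qed

lemma separable_map_comp:
  fixes Mid :: "'p::finite \<Rightarrow> 'm set"
  assumes "separable_map Mid Out \<Phi>2" "separable_map In Mid \<Phi>1"
    and "\<forall>p. finite (Mid p)" "\<forall>p p'. p \<noteq> p' \<longrightarrow> Mid p \<inter> Mid p' = {}"
  shows "separable_map In Out (\<lambda>\<rho>. \<Phi>2 (\<Phi>1 \<rho>))"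
proof -
  obtain m1 K1 m2 K2 where \<Phi>: "\<Phi>1 = slocc_apply UNIV In Mid K1 m1" "\<Phi>2 = slocc_apply UNIV Mid Out K2 m2"
    using assms(1,2) unfolding separable_map_def by blast
  have "(\<lambda>\<rho>. \<Phi>2 (\<Phi>1 \<rho>)) = kraus_map ({..<m2} \<times> {..<m1}) (\<Union>(range In))
      (\<lambda>(k2, k1). kraus_prod UNIV In Out (\<lambda>p b a. \<Sum>y\<in>basis (Mid p). K2 k2 p b y * K1 k1 p y a))"
  proof -
    have "op_mult (\<Union>(range Mid)) (kraus_prod UNIV Mid Out A2) (kraus_prod UNIV In Mid A1) =
        kraus_prod UNIV In Out (\<lambda>p b a. \<Sum>y\<in>basis (Mid p). A2 p b y * A1 p y a)" for A1 A2
      using assms(3,4) by (intro op_mult_kraus_prod) auto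
    then show ?thesis
      unfolding \<Phi> slocc_apply_eq_kraus_map kraus_map_kraus_map by (simp add: split_def)
  qed
  then show ?thesis
    using separable_map_kraus_map[of "{..<m2} \<times> {..<m1}" In Out] by (simp add: split_def)
qed

lemma separable_map_cong:
  assumes "separable_map In Out \<Phi>"
    and "\<And>a a'. a \<in> basis (\<Union>(range In)) \<Longrightarrow> a' \<in> basis (\<Union>(range In)) \<Longrightarrow> \<rho> a a' = \<sigma> a a'"
  shows "\<Phi> \<rho> = \<Phi> \<sigma>"
  using assms kraus_map_cong unfolding separable_map_def slocc_apply_eq_kraus_map by metis

lemma separable_map_scale:
  assumes "separable_map In Out \<Phi>"
  shows "\<Phi> (\<lambda>a a'. c * \<rho> a a') b b' = c * \<Phi> \<rho> b b'"
  using assms kraus_map_scale unfolding separable_map_def slocc_apply_eq_kraus_map by metis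

lemma slocc_converts_iff_separable_map:
  fixes In :: "'p::finite \<Rightarrow> 'q set"
  shows "slocc_converts UNIV In Out \<rho> \<sigma> \<longleftrightarrow>
    (\<forall>p. finite (In p) \<and> finite (Out p)) \<and>
    (\<forall>p p'. p \<noteq> p' \<longrightarrow> In p \<inter> In p' = {} \<and> Out p \<inter> Out p' = {}) \<and>
    (\<exists>\<Phi>. separable_map In Out \<Phi> \<and> trace (\<Union>(range Out)) (\<Phi> \<rho>) \<noteq> 0 \<and>
      (\<forall>b b'. \<sigma> b b' = (if b \<in> basis (\<Union>(range Out)) \<and> b' \<in> basis (\<Union>(range Out))
        then \<Phi> \<rho> b b' / trace (\<Union>(range Out)) (\<Phi> \<rho>) else 0)))"
  unfolding slocc_converts_def separable_map_def by auto

lemma slocc_converts_separable_mapE: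
  fixes In :: "'p::finite \<Rightarrow> 'q set"
  assumes "slocc_converts UNIV In Out \<rho> \<sigma>"
  obtains \<Phi> t where "separable_map In Out \<Phi>" "t \<noteq> 0"
    "\<And>b b'. b \<in> basis (\<Union>(range Out)) \<Longrightarrow> b' \<in> basis (\<Union>(range Out)) \<Longrightarrow> \<Phi> \<rho> b b' = t * \<sigma> b b'"
proof -
  obtain \<Phi> where "separable_map In Out \<Phi>" "trace (\<Union>(range Out)) (\<Phi> \<rho>) \<noteq> 0"
    "\<forall>b b'. \<sigma> b b' = (if b \<in> basis (\<Union>(range Out)) \<and> b' \<in> basis (\<Union>(range Out))
      then \<Phi> \<rho> b b' / trace (\<Union>(range Out)) (\<Phi> \<rho>) else 0)"
    using assms unfolding slocc_converts_iff_separable_map by blast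
  then show thesis
    using that[of \<Phi> "trace (\<Union>(range Out)) (\<Phi> \<rho>)"] by simp
qed

lemma slocc_converts_trans_scaled:
  fixes Mid :: "'p::finite \<Rightarrow> 'm set"
  assumes conv: "slocc_converts UNIV Mid Out \<sigma> \<tau>"
    and \<Psi>: "separable_map In Mid \<Psi>" and "t \<noteq> 0"
    and \<Psi>_scaled: "\<And>a a'. a \<in> basis (\<Union>(range Mid)) \<Longrightarrow> a' \<in> basis (\<Union>(range Mid)) \<Longrightarrow>
      \<Psi> \<rho> a a' = t * \<sigma> a a'"
    and "\<forall>p. finite (In p)" "\<forall>p p'. p \<noteq> p' \<longrightarrow> In p \<inter> In p' = {}"
  shows "slocc_converts UNIV In Out \<rho> \<tau>"
proof -
  let ?W = "\<Union>(range Out)"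
  obtain \<Phi> where fin: "\<forall>p. finite (Mid p) \<and> finite (Out p)"
    and disj: "\<forall>p p'. p \<noteq> p' \<longrightarrow> Mid p \<inter> Mid p' = {} \<and> Out p \<inter> Out p' = {}"
    and \<Phi>: "separable_map Mid Out \<Phi>" and tr: "trace ?W (\<Phi> \<sigma>) \<noteq> 0"
    and \<tau>: "\<forall>b b'. \<tau> b b' = (if b \<in> basis ?W \<and> b' \<in> basis ?W then \<Phi> \<sigma> b b' / trace ?W (\<Phi> \<sigma>) else 0)"
    using conv unfolding slocc_converts_iff_separable_map by blast
  have "\<Phi> (\<Psi> \<rho>) = \<Phi> (\<lambda>a a'. t * \<sigma> a a')"
    by (rule separable_map_cong[OF \<Phi> \<Psi>_scaled])
  then have eq: "\<Phi> (\<Psi> \<rho>) b b' = t * \<Phi> \<sigma> b b'" for b b'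
    by (simp add: separable_map_scale[OF \<Phi>])
  then have "trace ?W (\<Phi> (\<Psi> \<rho>)) = t * trace ?W (\<Phi> \<sigma>)"
    by (simp add: trace_def sum_distrib_left)
  moreover have "separable_map In Out (\<lambda>\<rho>. \<Phi> (\<Psi> \<rho>))"
    by (rule separable_map_comp[OF \<Phi> \<Psi>]) (use fin disj in auto)
  ultimately show ?thesis
    unfolding slocc_converts_iff_separable_map
    using assms(3,5,6) fin disj tr \<tau> eq by (intro conjI exI[of _ "\<lambda>\<rho>. \<Phi> (\<Psi> \<rho>)"]) auto
qed

lemma slocc_converts_trace:
  assumes "slocc_converts P In Out \<rho> \<sigma>"
  shows "trace (\<Union>(Out ` P)) \<sigma> = 1"
proof -
  obtain m K where "trace (\<Union>(Out ` P)) (slocc_apply P In Out K m \<rho>) \<noteq> 0"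
    and "\<And>b. b \<in> basis (\<Union>(Out ` P)) \<Longrightarrow>
      \<sigma> b b = slocc_apply P In Out K m \<rho> b b / trace (\<Union>(Out ` P)) (slocc_apply P In Out K m \<rho>)"
    using assms unfolding slocc_converts_def by auto
  then show ?thesis
    by (simp add: trace_def sum_divide_distrib[symmetric])
qed

lemma slocc_converts_psd:
  assumes "slocc_converts P In Out \<rho> \<sigma>" "psd (\<Union>(In ` P)) \<rho>"
  shows "psd (\<Union>(Out ` P)) \<sigma>"
proof -
  obtain m K where fin: "finite (\<Union>(Out ` P))"
    and tr: "trace (\<Union>(Out ` P)) (slocc_apply P In Out K m \<rho>) \<noteq> 0"
    and \<sigma>: "\<And>b b'. b \<in> basis (\<Union>(Out ` P)) \<Longrightarrow> b' \<in> basis (\<Union>(Out ` P)) \<Longrightarrow>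
      \<sigma> b b' = slocc_apply P In Out K m \<rho> b b' / trace (\<Union>(Out ` P)) (slocc_apply P In Out K m \<rho>)"
    using assms(1) unfolding slocc_converts_def by auto
  have "psd (\<Union>(Out ` P)) (slocc_apply P In Out K m \<rho>)"
    unfolding slocc_apply_eq_kraus_map by (rule psd_kraus_map[OF assms(2)])
  then show ?thesis
    by (rule psd_normalize[OF _ fin tr \<sigma>])
qed

section \<open>Parallel repetition\<close>

lemma block_index_less:
  fixes c i m n :: nat
  assumes "c < n" "i < m"
  shows "c * m + i < n * m"
proof -
  have "c * m + i < Suc c * m" using assms(2) by simp
  also have "\<dots> \<le> n * m" using assms(1) by (intro mult_le_mono1) simp
  finally show ?thesis .
qed

lemma prod_lessThan_mult:
  fixes n m :: nat
  shows "(\<Prod>i<n * m. g i) = (\<Prod>c<n. \<Prod>j<m. (g (c * m + j) :: 'a::comm_monoid_mult))"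
proof -
  have "(\<Prod>c<n. \<Prod>j<m. g (c * m + j)) = (\<Prod>c<n. prod g {c * m..<c * m + m})"
    by (rule prod.cong[OF refl])
      (simp add: prod.atLeastLessThan_shift_0[of g "c * m" "c * m + m" for c] atLeast0LessThan)
  also have "\<dots> = (\<Prod>i<n * m. g i)" by (rule prod.nat_group)
  finally show ?thesis by simp
qed

definition slice :: "nat \<Rightarrow> (nat \<times> 'q \<Rightarrow> bool) \<Rightarrow> ('q \<Rightarrow> bool)" where
  "slice c b = (\<lambda>q. b (c, q))"

text \<open>The \<open>n * m\<close> copies are grouped into \<open>n\<close> blocks of \<open>m\<close>: copy \<open>c * m + j\<close> is
  copy \<open>j\<close> of block \<open>c\<close>.\<close>

definition block :: "nat \<Rightarrow> nat \<Rightarrow> (nat \<times> 'p \<Rightarrow> bool) \<Rightarrow> (nat \<times> 'p \<Rightarrow> bool)" where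
  "block m c a = (\<lambda>(i, p). i < m \<and> a (c * m + i, p))"

definition glue :: "nat \<Rightarrow> nat \<Rightarrow> (nat \<Rightarrow> (nat \<times> 'p \<Rightarrow> bool)) \<Rightarrow> (nat \<times> 'p \<Rightarrow> bool)" where
  "glue n m \<alpha> = (\<lambda>(i, p). i < n * m \<and> \<alpha> (i div m) (i mod m, p))"

lemma slice_in_basis: "b \<in> basis ({..<n} \<times> Q) \<Longrightarrow> c < n \<Longrightarrow> slice c b \<in> basis Q"
  by (auto simp: basis_def slice_def)

lemma slice_restr: "c < n \<Longrightarrow> slice c (restr b ({..<n} \<times> Q)) = restr (slice c b) Q"
  by (auto simp: slice_def restr_def fun_eq_iff)

lemma block_restr:
  assumes "c < n"
  shows "block m c (restr a ({..<n * m} \<times> P)) = restr (block m c a) ({..<m} \<times> P)"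
  using block_index_less[OF assms] by (auto simp: block_def restr_def fun_eq_iff)

lemma block_glue:
  assumes "\<alpha> \<in> PiE {..<n} (\<lambda>_. basis ({..<m} \<times> P))" "c < n"
  shows "block m c (glue n m \<alpha>) = \<alpha> c"
proof (rule ext, clarify)
  fix i p
  have "\<alpha> c \<in> basis ({..<m} \<times> P)" using assms by auto
  then show "block m c (glue n m \<alpha>) (i, p) = \<alpha> c (i, p)"
    using block_index_less[OF assms(2), of i m]
    by (cases "i < m") (auto simp: block_def glue_def basis_def)
qed

lemma bij_betw_glue:
  "bij_betw (glue n m) (PiE {..<n} (\<lambda>_. basis ({..<m} \<times> P))) (basis ({..<n * m} \<times> P))"
proof (rule bij_betw_byWitness[where f' = "\<lambda>a. restrict (\<lambda>c. block m c a) {..<n}"])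
  show "\<forall>\<alpha>\<in>PiE {..<n} (\<lambda>_. basis ({..<m} \<times> P)). restrict (\<lambda>c. block m c (glue n m \<alpha>)) {..<n} = \<alpha>"
  proof
    fix \<alpha> assume \<alpha>: "\<alpha> \<in> PiE {..<n} (\<lambda>_. basis ({..<m} \<times> P))"
    show "restrict (\<lambda>c. block m c (glue n m \<alpha>)) {..<n} = \<alpha>"
    proof (rule ext)
      fix c
      show "restrict (\<lambda>c. block m c (glue n m \<alpha>)) {..<n} c = \<alpha> c"
        using block_glue[OF \<alpha>, of c] \<alpha> by (cases "c < n") (auto simp: PiE_def extensional_def)
    qed
  qed
  show "\<forall>a\<in>basis ({..<n * m} \<times> P). glue n m (restrict (\<lambda>c. block m c a) {..<n}) = a"
  proof
    fix a assume a: "a \<in> basis ({..<n * m} \<times> P)"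
    show "glue n m (restrict (\<lambda>c. block m c a) {..<n}) = a"
    proof (rule ext, clarify)
      fix i p
      show "glue n m (restrict (\<lambda>c. block m c a) {..<n}) (i, p) = a (i, p)"
      proof (cases "i < n * m")
        case True
        then have "m > 0" by (cases m) auto
        then show ?thesis
          using True by (simp add: glue_def block_def less_mult_imp_div_less)
      next
        case False
        then show ?thesis using a by (auto simp: glue_def basis_def)
      qed
    qed
  qed
  show "glue n m ` PiE {..<n} (\<lambda>_. basis ({..<m} \<times> P)) \<subseteq> basis ({..<n * m} \<times> P)"
    by (auto simp: glue_def basis_def PiE_iff) (meson less_mult_imp_div_less lessThan_iff)
  show "(\<lambda>a. restrict (\<lambda>c. block m c a) {..<n}) ` basis ({..<n * m} \<times> P) \<subseteq>
      PiE {..<n} (\<lambda>_. basis ({..<m} \<times> P))"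
    by (auto simp: block_def basis_def)
qed

lemma copies_glue:
  assumes "\<alpha> \<in> PiE {..<n} (\<lambda>_. basis ({..<m} \<times> Q))" "\<alpha>' \<in> PiE {..<n} (\<lambda>_. basis ({..<m} \<times> Q))"
  shows "copies (n * m) Q \<rho> (glue n m \<alpha>) (glue n m \<alpha>') = (\<Prod>c<n. copies m Q \<rho> (\<alpha> c) (\<alpha>' c))"
proof -
  have glue_apply: "glue n m \<beta> (c * m + j, q) = \<beta> c (j, q)"
    if "\<beta> \<in> PiE {..<n} (\<lambda>_. basis ({..<m} \<times> Q))" "c < n" "j < m" for \<beta> c j q
    using block_glue[OF that(1,2)] that(3) unfolding block_def by (metis (mono_tags) case_prod_conv)
  have "copies (n * m) Q \<rho> (glue n m \<alpha>) (glue n m \<alpha>') =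
      (\<Prod>c<n. \<Prod>j<m. \<rho> (\<lambda>q. glue n m \<alpha> (c * m + j, q)) (\<lambda>q. glue n m \<alpha>' (c * m + j, q)))"
  proof -
    have "glue n m \<alpha> \<in> basis ({..<n * m} \<times> Q)" "glue n m \<alpha>' \<in> basis ({..<n * m} \<times> Q)"
      using assms by (simp_all add: bij_betw_apply[OF bij_betw_glue])
    then show ?thesis by (simp add: copies_def prod_lessThan_mult)
  qed
  also have "\<dots> = (\<Prod>c<n. copies m Q \<rho> (\<alpha> c) (\<alpha>' c))"
    using assms by (intro prod.cong refl) (simp add: copies_def glue_apply PiE_iff)
  finally show ?thesis .
qed

definition tensor_kraus ::
  "nat \<Rightarrow> nat \<Rightarrow> ('i \<Rightarrow> 'p \<Rightarrow> ('q \<Rightarrow> bool) \<Rightarrow> (nat \<times> 'p \<Rightarrow> bool) \<Rightarrow> complex) \<Rightarrow>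
    (nat \<Rightarrow> 'i) \<Rightarrow> 'p \<Rightarrow> (nat \<times> 'q \<Rightarrow> bool) \<Rightarrow> (nat \<times> 'p \<Rightarrow> bool) \<Rightarrow> complex" where
  "tensor_kraus n m K \<kappa> p b a = (\<Prod>c<n. K (\<kappa> c) p (slice c b) (block m c a))"

lemma kraus_prod_tensor_glue:
  fixes K :: "'i \<Rightarrow> 'p::finite \<Rightarrow> ('q \<Rightarrow> bool) \<Rightarrow> (nat \<times> 'p \<Rightarrow> bool) \<Rightarrow> complex"
  assumes "\<alpha> \<in> PiE {..<n} (\<lambda>_. basis ({..<m} \<times> UNIV))"
  shows "kraus_prod UNIV (\<lambda>p. {..<n * m} \<times> {p}) (\<lambda>p. {..<n} \<times> Out p) (tensor_kraus n m K \<kappa>)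
      b (glue n m \<alpha>) =
    (\<Prod>c<n. kraus_prod UNIV (\<lambda>p. {..<m} \<times> {p}) Out (K (\<kappa> c)) (slice c b) (\<alpha> c))"
proof -
  have "block m c (restr (glue n m \<alpha>) ({..<n * m} \<times> {p})) = restr (\<alpha> c) ({..<m} \<times> {p})"
    if "c < n" for c p
    by (simp only: block_restr[OF that] block_glue[OF assms that])
  then show ?thesis
    unfolding kraus_prod_def tensor_kraus_def by (simp add: slice_restr prod.swap[of _ UNIV])
qed

lemma kraus_map_tensor_copies:
  fixes K :: "'i \<Rightarrow> 'p::finite \<Rightarrow> ('q \<Rightarrow> bool) \<Rightarrow> (nat \<times> 'p \<Rightarrow> bool) \<Rightarrow> complex"
  assumes "finite I" "b \<in> basis ({..<n} \<times> V)" "b' \<in> basis ({..<n} \<times> V)"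
  shows "kraus_map (PiE {..<n} (\<lambda>_. I)) ({..<n * m} \<times> UNIV)
      (\<lambda>\<kappa>. kraus_prod UNIV (\<lambda>p. {..<n * m} \<times> {p}) (\<lambda>p. {..<n} \<times> Out p) (tensor_kraus n m K \<kappa>))
      (copies (n * m) UNIV \<rho>) b b' =
    copies n V (kraus_map I ({..<m} \<times> UNIV) (\<lambda>k. kraus_prod UNIV (\<lambda>p. {..<m} \<times> {p}) Out (K k))
      (copies m UNIV \<rho>)) b b'"
    (is "?lhs = ?rhs")
proof -
  let ?B = "basis ({..<m} \<times> (UNIV :: 'p set))"
  let ?PB = "PiE {..<n} (\<lambda>_. ?B)"
  let ?kp = "\<lambda>k. kraus_prod UNIV (\<lambda>p. {..<m} \<times> {p}) Out (K k)"
  let ?kT = "\<lambda>\<kappa>. kraus_prod UNIV (\<lambda>p. {..<n * m} \<times> {p}) (\<lambda>p. {..<n} \<times> Out p) (tensor_kraus n m K \<kappa>)"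
  let ?H = "\<lambda>c k \<alpha> \<alpha>'. ?kp k (slice c b) \<alpha> * copies m UNIV \<rho> \<alpha> \<alpha>' * cnj (?kp k (slice c b') \<alpha>')"
  have finB: "finite ?B" by (simp add: finite_basis)
  have "?rhs = (\<Prod>c<n. \<Sum>k\<in>I. \<Sum>\<alpha>\<in>?B. \<Sum>\<alpha>'\<in>?B. ?H c k \<alpha> \<alpha>')"
    using assms(2,3) by (simp add: copies_def slice_def kraus_map_def sandwich_def)
  also have "\<dots> = (\<Sum>\<kappa>\<in>PiE {..<n} (\<lambda>_. I). \<Sum>\<alpha>\<in>?PB. \<Sum>\<alpha>'\<in>?PB. \<Prod>c<n. ?H c (\<kappa> c) (\<alpha> c) (\<alpha>' c))"
    using assms(1) finB by (simp add: prod_sum_PiE)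
  also have "\<dots> = (\<Sum>\<kappa>\<in>PiE {..<n} (\<lambda>_. I). \<Sum>\<alpha>\<in>?PB. \<Sum>\<alpha>'\<in>?PB.
      ?kT \<kappa> b (glue n m \<alpha>) * copies (n * m) UNIV \<rho> (glue n m \<alpha>) (glue n m \<alpha>') *
      cnj (?kT \<kappa> b' (glue n m \<alpha>')))"
    by (rule sum.cong[OF refl])+
      (simp add: kraus_prod_tensor_glue copies_glue cnj_prod prod.distrib)
  also have "\<dots> = ?lhs"
  proof -
    have glue: "(\<Sum>\<alpha>\<in>?PB. g (glue n m \<alpha>)) = sum g (basis ({..<n * m} \<times> UNIV))" for g :: "_ \<Rightarrow> complex"
      by (rule sum.reindex_bij_betw[OF bij_betw_glue])
    show ?thesis
      unfolding kraus_map_def sandwich_def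
      by (rule sum.cong[OF refl], rule trans[OF sum.cong[OF refl glue] glue])
  qed
  finally show ?thesis ..
qed

lemma UN_times_singleton: "(\<Union>p\<in>P. A \<times> {p}) = A \<times> P"
  by auto

lemma copies_scale:
  assumes "\<And>a a'. a \<in> basis Q \<Longrightarrow> a' \<in> basis Q \<Longrightarrow> X a a' = c * Y a a'"
    and "b \<in> basis ({..<n} \<times> Q)" "b' \<in> basis ({..<n} \<times> Q)"
  shows "copies n Q X b b' = c ^ n * copies n Q Y b b'"
proof -
  have "X (slice i b) (slice i b') = c * Y (slice i b) (slice i b')" if "i < n" for i
    using assms slice_in_basis that by blast
  then show ?thesis
    using assms(2,3) by (simp add: copies_def slice_def prod.distrib)
qed

lemma slocc_converts_copies:
  fixes Out :: "'p::finite \<Rightarrow> 'q set"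
  assumes "slocc_converts UNIV (\<lambda>p. {..<m} \<times> {p}) Out (copies m UNIV \<rho>) \<tau>"
  obtains \<Psi> t where "separable_map (\<lambda>p. {..<n * m} \<times> {p}) (\<lambda>p. {..<n} \<times> Out p) \<Psi>" "t \<noteq> 0"
    "\<And>b b'. b \<in> basis ({..<n} \<times> \<Union>(range Out)) \<Longrightarrow> b' \<in> basis ({..<n} \<times> \<Union>(range Out)) \<Longrightarrow>
      \<Psi> (copies (n * m) UNIV \<rho>) b b' = t * copies n (\<Union>(range Out)) \<tau> b b'"
proof -
  obtain \<Phi> t where \<Phi>: "separable_map (\<lambda>p. {..<m} \<times> {p}) Out \<Phi>" and "t \<noteq> 0"
    and \<Phi>_scaled: "\<And>b b'. b \<in> basis (\<Union>(range Out)) \<Longrightarrow> b' \<in> basis (\<Union>(range Out)) \<Longrightarrow>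
      \<Phi> (copies m UNIV \<rho>) b b' = t * \<tau> b b'"
    using slocc_converts_separable_mapE[OF assms] by blast
  obtain k K where \<Phi>_eq: "\<Phi> = slocc_apply UNIV (\<lambda>p. {..<m} \<times> {p}) Out K k"
    using \<Phi> unfolding separable_map_def by blast
  define \<Psi> where "\<Psi> = kraus_map (PiE {..<n} (\<lambda>_. {..<k})) ({..<n * m} \<times> UNIV)
    (\<lambda>\<kappa>. kraus_prod UNIV (\<lambda>p. {..<n * m} \<times> {p}) (\<lambda>p. {..<n} \<times> Out p) (tensor_kraus n m K \<kappa>))"
  have "separable_map (\<lambda>p. {..<n * m} \<times> {p}) (\<lambda>p. {..<n} \<times> Out p) \<Psi>"
    using separable_map_kraus_map[of "PiE {..<n} (\<lambda>_. {..<k})" "\<lambda>p. {..<n * m} \<times> {p}"]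
    unfolding \<Psi>_def UN_times_singleton by (simp add: finite_PiE)
  moreover have "\<Psi> (copies (n * m) UNIV \<rho>) b b' = t ^ n * copies n (\<Union>(range Out)) \<tau> b b'"
    if "b \<in> basis ({..<n} \<times> \<Union>(range Out))" "b' \<in> basis ({..<n} \<times> \<Union>(range Out))" for b b'
  proof -
    have "\<Psi> (copies (n * m) UNIV \<rho>) b b' = copies n (\<Union>(range Out)) (\<Phi> (copies m UNIV \<rho>)) b b'"
      unfolding \<Psi>_def \<Phi>_eq slocc_apply_eq_kraus_map UN_times_singleton
      by (rule kraus_map_tensor_copies[OF _ that]) simp
    then show ?thesis
      using copies_scale[OF \<Phi>_scaled that] by simp
  qed
  ultimately show thesis
    using that[of \<Psi> "t ^ n"] \<open>t \<noteq> 0\<close> by simp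
qed

lemma kraus_prod_regroup:
  fixes Out :: "'p::finite \<Rightarrow> 'q set"
  assumes "\<forall>p. finite (Out p)" "\<forall>p p'. p \<noteq> p' \<longrightarrow> Out p \<inter> Out p' = {}"
  shows "kraus_prod (\<Union>(range Out)) (\<lambda>q. {..<n} \<times> {q}) (\<lambda>q. {q}) K =
    kraus_prod UNIV (\<lambda>p. {..<n} \<times> Out p) Out (\<lambda>p. kraus_prod (Out p) (\<lambda>q. {..<n} \<times> {q}) (\<lambda>q. {q}) K)"
proof (intro ext)
  fix b a
  have "restr (restr b (Out p)) {q} = restr b {q}"
    "restr (restr a ({..<n} \<times> Out p)) ({..<n} \<times> {q}) = restr a ({..<n} \<times> {q})" if "q \<in> Out p" for p q
    using that by (auto intro: restr_restr_subset)
  then show "kraus_prod (\<Union>(range Out)) (\<lambda>q. {..<n} \<times> {q}) (\<lambda>q. {q}) K b a =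
      kraus_prod UNIV (\<lambda>p. {..<n} \<times> Out p) Out (\<lambda>p. kraus_prod (Out p) (\<lambda>q. {..<n} \<times> {q}) (\<lambda>q. {q}) K) b a"
    unfolding kraus_prod_def using assms by (simp add: prod.UNION_disjoint)
qed

lemma separable_map_local:
  fixes Out :: "'p::finite \<Rightarrow> 'q set"
  assumes "\<forall>p. finite (Out p)" "\<forall>p p'. p \<noteq> p' \<longrightarrow> Out p \<inter> Out p' = {}"
  shows "separable_map (\<lambda>p. {..<n} \<times> Out p) Out
    (slocc_apply (\<Union>(range Out)) (\<lambda>q. {..<n} \<times> {q}) (\<lambda>q. {q}) K k)"
proof -
  have "\<Union>((\<lambda>q. {..<n} \<times> {q}) ` \<Union>(range Out)) = \<Union>(range (\<lambda>p. {..<n} \<times> Out p))"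
    by auto
  then show ?thesis
    using separable_map_kraus_map[of "{..<k}" "\<lambda>p. {..<n} \<times> Out p" Out]
    unfolding slocc_apply_eq_kraus_map kraus_prod_regroup[OF assms] by simp
qed

lemma slocc_converts_regroup:
  fixes Out :: "'p::finite \<Rightarrow> 'q set" and n :: nat
  assumes "slocc_converts (\<Union>(range Out)) (\<lambda>q. {..<n} \<times> {q}) (\<lambda>q. {q}) X \<sigma>"
    and "\<forall>p. finite (Out p)" "\<forall>p p'. p \<noteq> p' \<longrightarrow> Out p \<inter> Out p' = {}"
  shows "slocc_converts UNIV (\<lambda>p. {..<n} \<times> Out p) Out X \<sigma>"
proof -
  obtain k K where
    "trace (\<Union>(range Out)) (slocc_apply (\<Union>(range Out)) (\<lambda>q. {..<n} \<times> {q}) (\<lambda>q. {q}) K k X) \<noteq> 0"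
    "\<forall>b b'. \<sigma> b b' = (if b \<in> basis (\<Union>(range Out)) \<and> b' \<in> basis (\<Union>(range Out))
      then slocc_apply (\<Union>(range Out)) (\<lambda>q. {..<n} \<times> {q}) (\<lambda>q. {q}) K k X b b' /
        trace (\<Union>(range Out)) (slocc_apply (\<Union>(range Out)) (\<lambda>q. {..<n} \<times> {q}) (\<lambda>q. {q}) K k X)
      else 0)"
    using assms(1) unfolding slocc_converts_def by auto
  then show ?thesis
    unfolding slocc_converts_iff_separable_map
    by (intro conjI exI[of _ "slocc_apply (\<Union>(range Out)) (\<lambda>q. {..<n} \<times> {q}) (\<lambda>q. {q}) K k"])
      (use separable_map_local[OF assms(2,3)] assms(2,3) in \<open>auto simp: disjoint_iff\<close>)
qed

lemma slocc_converts_copies_trans: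
  fixes Out :: "'p::finite \<Rightarrow> 'q set"
  assumes "slocc_converts UNIV (\<lambda>p. {..<m} \<times> {p}) Out (copies m UNIV \<rho>) \<tau>"
    and "slocc_converts (\<Union>(range Out)) (\<lambda>q. {..<n} \<times> {q}) (\<lambda>q. {q}) (copies n (\<Union>(range Out)) \<tau>) \<sigma>"
  shows "slocc_converts UNIV (\<lambda>p. {..<n * m} \<times> {p}) Out (copies (n * m) UNIV \<rho>) \<sigma>"
proof -
  have fin: "\<forall>p. finite (Out p)" and disj: "\<forall>p p'. p \<noteq> p' \<longrightarrow> Out p \<inter> Out p' = {}"
    using assms(1) unfolding slocc_converts_iff_separable_map by auto
  obtain \<Psi> t where \<Psi>: "separable_map (\<lambda>p. {..<n * m} \<times> {p}) (\<lambda>p. {..<n} \<times> Out p) \<Psi>"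
    and t: "t \<noteq> 0"
    and \<Psi>_scaled: "\<And>b b'. b \<in> basis ({..<n} \<times> \<Union>(range Out)) \<Longrightarrow> b' \<in> basis ({..<n} \<times> \<Union>(range Out)) \<Longrightarrow>
      \<Psi> (copies (n * m) UNIV \<rho>) b b' = t * copies n (\<Union>(range Out)) \<tau> b b'"
    using slocc_converts_copies[OF assms(1)] by blast
  have "(\<Union>p. {..<n} \<times> Out p) = {..<n} \<times> \<Union>(range Out)"
    by auto
  then show ?thesis
    by (intro slocc_converts_trans_scaled[OF slocc_converts_regroup[OF assms(2) fin disj] \<Psi> t])
      (auto simp: \<Psi>_scaled)
qed

section \<open>Edge counts in graph states\<close>

definition edges_in :: "nat set \<Rightarrow> (nat \<Rightarrow> nat \<Rightarrow> bool) \<Rightarrow> (nat \<Rightarrow> bool) \<Rightarrow> (nat \<times> nat) set" where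
  "edges_in V E a = {(i, j). i \<in> V \<and> j \<in> V \<and> i < j \<and> E i j \<and> a i \<and> a j}"

definition nbr_count :: "nat set \<Rightarrow> (nat \<Rightarrow> nat \<Rightarrow> bool) \<Rightarrow> nat \<Rightarrow> (nat \<Rightarrow> bool) \<Rightarrow> nat" where
  "nbr_count V E w a = card {j \<in> V. E w j \<and> a j}"

lemma edges_in_upd:
  assumes "simple_graph V E" "w \<in> V"
  shows "edges_in V E (y(w := True)) = edges_in V E y \<union> (\<lambda>j. (min w j, max w j)) ` {j \<in> V. E w j \<and> y j}"
    (is "_ = _ \<union> ?f ` ?J")
proof
  have E: "E i j \<Longrightarrow> i \<in> V \<and> j \<in> V \<and> i \<noteq> j \<and> E j i" for i j
    using assms(1) unfolding simple_graph_def by blast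
  show "edges_in V E (y(w := True)) \<subseteq> edges_in V E y \<union> ?f ` ?J"
  proof
    fix p assume p: "p \<in> edges_in V E (y(w := True))"
    obtain i j where ij: "p = (i, j)" by (cases p)
    consider "i = w" | "j = w" | "i \<noteq> w" "j \<noteq> w" by blast
    then show "p \<in> edges_in V E y \<union> ?f ` ?J"
    proof cases
      case 1
      then have "j \<in> ?J" "p = ?f j" using p ij E[of i j] by (auto simp: edges_in_def)
      then show ?thesis by blast
    next
      case 2
      then have "i \<in> ?J" "p = ?f i" using p ij E[of i j] by (auto simp: edges_in_def)
      then show ?thesis by blast
    next
      case 3
      then show ?thesis using p ij by (auto simp: edges_in_def)
    qed
  qed
  show "edges_in V E y \<union> ?f ` ?J \<subseteq> edges_in V E (y(w := True))"
    using assms(2) E by (auto simp: edges_in_def min_def max_def) (metis le_neq_implies_less)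
qed

lemma card_edges_in_upd:
  assumes "simple_graph V E" "finite V" "w \<in> V" "\<not> y w"
  shows "card (edges_in V E (y(w := True))) = card (edges_in V E y) + nbr_count V E w y"
proof -
  let ?J = "{j \<in> V. E w j \<and> y j}"
  let ?f = "\<lambda>j. (min w j, max w j)"
  have "edges_in V E y \<inter> ?f ` ?J = {}"
    using assms(4) by (auto simp: edges_in_def min_def max_def split: if_splits)
  moreover have "inj_on ?f ?J"
    by (rule inj_onI) (auto simp: min_def max_def split: if_splits)
  moreover have "finite (edges_in V E y)"
    by (rule finite_subset[of _ "V \<times> V"]) (auto simp: edges_in_def assms(2))
  ultimately show ?thesis
    unfolding edges_in_upd[OF assms(1,3)] nbr_count_def
    using assms(2) by (simp add: card_Un_disjoint card_image)
qed

lemma card_edges_in_split: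
  assumes sg: "simple_graph V E" and fin: "finite V" and uv: "u \<in> V" "v \<in> V" "u \<noteq> v" "E u v"
    and a: "a \<in> basis V"
  shows "card (edges_in V E a) = card (edges_in V E (restr a (V - {u, v})))
     + (if a u then nbr_count V E u (restr a (V - {u, v})) else 0)
     + (if a v then nbr_count V E v (restr a (V - {u, v})) else 0) + (if a u \<and> a v then 1 else 0)"
proof -
  let ?x = "restr a (V - {u, v})"
  define x1 where "x1 = (if a u then ?x(u := True) else ?x)"
  have xu: "\<not> ?x u" and xv: "\<not> ?x v" by (auto simp: restr_def)
  have x1v: "\<not> x1 v" using xv uv by (auto simp: x1_def)
  have a_eq: "a = (if a v then x1(v := True) else x1)"
    using a by (auto simp: x1_def restr_def basis_def fun_eq_iff)
  have c1: "card (edges_in V E x1) = card (edges_in V E ?x) + (if a u then nbr_count V E u ?x else 0)"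
    using card_edges_in_upd[of V E u ?x, OF sg fin uv(1) xu] by (simp add: x1_def)
  have c2: "card (edges_in V E a) = card (edges_in V E x1) + (if a v then nbr_count V E v x1 else 0)"
    using card_edges_in_upd[of V E v x1, OF sg fin uv(2) x1v] a_eq by (cases "a v") simp_all
  have "nbr_count V E v x1 = nbr_count V E v ?x + (if a u then 1 else 0)"
  proof (cases "a u")
    case True
    have "E v u" using sg uv unfolding simple_graph_def by blast
    then have "{j \<in> V. E v j \<and> x1 j} = insert u {j \<in> V. E v j \<and> ?x j}"
      using True uv by (auto simp: x1_def)
    then show ?thesis using True fin xu by (simp add: nbr_count_def)
  next
    case False
    then show ?thesis by (simp add: x1_def)
  qed
  then show ?thesis using c1 c2 by simp
qed

lemma cut_edge_exists:
  assumes "simple_graph V E" "graph_connected V E" "S \<subseteq> V" "S \<noteq> {}" "S \<noteq> V"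
  obtains u v where "u \<in> S" "v \<in> V" "v \<notin> S" "E u v"
proof -
  obtain s t where s: "s \<in> S" and t: "t \<in> V" "t \<notin> S" using assms(3-5) by blast
  have "E\<^sup>*\<^sup>* s t" using assms(2,3) s t unfolding graph_connected_def by blast
  have "\<exists>u w. u \<in> S \<and> w \<notin> S \<and> E u w" if "E\<^sup>*\<^sup>* s y" "y \<notin> S" for y
    using that
  proof (induction rule: rtranclp_induct)
    case base
    then show ?case using s by simp
  next
    case (step y z)
    then show ?case by (cases "y \<in> S") blast+
  qed
  then obtain u w where "u \<in> S" "w \<notin> S" "E u w" using \<open>E\<^sup>*\<^sup>* s t\<close> t by blast
  moreover have "w \<in> V" using assms(1) \<open>E u w\<close> unfolding simple_graph_def by blast
  ultimately show thesis using that by blast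
qed

section \<open>From the graph state to a Bell pair\<close>

definition part :: "nat set \<Rightarrow> nat set \<Rightarrow> party \<Rightarrow> nat set" where
  "part V S p = (if p = Alice then S else V - S)"

lemma
  assumes "S \<subseteq> V"
  shows UN_part: "\<Union>(range (part V S)) = V"
    and part_disjoint: "\<forall>p p'. p \<noteq> p' \<longrightarrow> part V S p \<inter> part V S p' = {}"
  using assms by (auto simp: part_def UNIV_party) (metis party.exhaust)+

lemma finite_part: "S \<subseteq> V \<Longrightarrow> finite V \<Longrightarrow> finite (part V S p)"
  by (auto simp: part_def intro: finite_subset)

lemma kraus_prod_party:
  "kraus_prod UNIV In Out A b a =
     A Alice (restr b (Out Alice)) (restr a (In Alice)) * A Bob (restr b (Out Bob)) (restr a (In Bob))"
  unfolding kraus_prod_def UNIV_party by simp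

definition party_bits :: "bool \<Rightarrow> bool \<Rightarrow> party \<Rightarrow> bool" where
  "party_bits \<beta> \<gamma> = (\<lambda>p. if p = Alice then \<beta> else \<gamma>)"

lemma party_bits_apply [simp]: "party_bits \<beta> \<gamma> Alice = \<beta>" "party_bits \<beta> \<gamma> Bob = \<gamma>"
  by (simp_all add: party_bits_def)

lemma sum_party_basis:
  "(\<Sum>b\<in>UNIV. f b) =
    f (party_bits True True) + f (party_bits True False) +
    f (party_bits False True) + f (party_bits False False)"
proof -
  have "bij_betw (\<lambda>(\<beta>, \<gamma>). party_bits \<beta> \<gamma>) (UNIV \<times> UNIV) (UNIV :: (party \<Rightarrow> bool) set)"
  proof (rule bij_betw_byWitness[where f' = "\<lambda>b. (b Alice, b Bob)"])
    show "\<forall>b\<in>UNIV. (\<lambda>(\<beta>, \<gamma>). party_bits \<beta> \<gamma>) (b Alice, b Bob) = b"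
      by (auto simp: fun_eq_iff party_bits_def) (metis party.exhaust)+
  qed auto
  then have "(\<Sum>b\<in>UNIV. f b) = (\<Sum>(\<beta>, \<gamma>)\<in>UNIV \<times> UNIV. f (party_bits \<beta> \<gamma>))"
    by (simp add: sum.reindex_bij_betw[symmetric] split_def)
  then show ?thesis
    by (simp add: UNIV_bool sum.cartesian_product[symmetric] add_ac)
qed

lemma sqrt2_sq: "complex_of_real (sqrt 2) * complex_of_real (sqrt 2) = 2"
  by (simp flip: of_real_mult)

text \<open>Measuring every vertex other than \<open>u\<close> and \<open>v\<close> in the computational basis
  with outcome \<open>x\<close> leaves \<open>u, v\<close> in the state with amplitudes
  \<open>(-1)^(|E(x)| + \<alpha> deg\<^sub>u(x) + \<beta> deg\<^sub>v(x) + \<alpha>\<beta>)\<close>.  Alice removes the first two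
  phases, Bob the third and then applies a Hadamard gate; the result is the Bell state.\<close>

locale cut_edge =
  fixes V :: "nat set" and E :: "nat \<Rightarrow> nat \<Rightarrow> bool" and S :: "nat set" and u v :: nat
  assumes simple: "simple_graph V E" and finite: "finite V" and S_subset: "S \<subseteq> V"
    and u_in: "u \<in> S" and v_in: "v \<in> V" and v_notin: "v \<notin> S" and edge: "E u v"
begin

definition rest :: "nat set" where
  "rest = V - {u, v}"

definition alice_corr :: "(nat \<Rightarrow> bool) \<Rightarrow> bool \<Rightarrow> bool \<Rightarrow> complex" where
  "alice_corr x \<beta> \<alpha> =
    (if \<beta> = \<alpha> then (-1) ^ (card (edges_in V E x) + (if \<alpha> then nbr_count V E u x else 0)) else 0)"

definition bob_corr :: "(nat \<Rightarrow> bool) \<Rightarrow> bool \<Rightarrow> bool \<Rightarrow> complex" where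
  "bob_corr x \<gamma> \<alpha> =
    (-1) ^ ((if \<alpha> then nbr_count V E v x else 0) + (if \<alpha> \<and> \<gamma> then 1 else 0)) *
    complex_of_real (1 / sqrt 2)"

definition proj_kraus :: "(nat \<Rightarrow> bool) \<Rightarrow> party \<Rightarrow> (party \<Rightarrow> bool) \<Rightarrow> (nat \<Rightarrow> bool) \<Rightarrow> complex" where
  "proj_kraus x p b a = (if p = Alice
     then (if restr a (S - {u}) = restr x (S - {u}) then alice_corr x (b Alice) (a u) else 0)
     else (if restr a (V - S - {v}) = restr x (V - S - {v}) then bob_corr x (b Bob) (a v) else 0))"

definition proj_kraus_joint :: "(nat \<Rightarrow> bool) \<Rightarrow> (party \<Rightarrow> bool) \<Rightarrow> (nat \<Rightarrow> bool) \<Rightarrow> complex" where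
  "proj_kraus_joint x b a =
    (if restr a rest = x then alice_corr x (b Alice) (a u) * bob_corr x (b Bob) (a v) else 0)"

definition bell_proj :: "nat qop \<Rightarrow> party qop" where
  "bell_proj = kraus_map (basis rest) V (\<lambda>x. kraus_prod UNIV (part V S) (\<lambda>p. {p}) (proj_kraus x))"

lemma u_in_V: "u \<in> V" and u_neq_v: "u \<noteq> v"
  using u_in S_subset v_notin by auto

lemma finite_rest: "finite rest"
  using finite by (simp add: rest_def)

lemma card_rest: "card rest = card V - 2"
  unfolding rest_def using u_in_V v_in u_neq_v finite by (simp add: card_Diff_subset)

lemma kraus_prod_proj_kraus:
  assumes "x \<in> basis rest"
  shows "kraus_prod UNIV (part V S) (\<lambda>p. {p}) (proj_kraus x) b a = proj_kraus_joint x b a"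
proof -
  have "restr (restr a S) (S - {u}) = restr a (S - {u})"
    "restr (restr a (V - S)) (V - S - {v}) = restr a (V - S - {v})"
    by (simp_all add: restr_restr_subset Diff_subset)
  moreover have "restr a S u = a u" "restr a (V - S) v = a v" "restr b {p} p = b p" for p
    using u_in v_in v_notin by (simp_all add: restr_def)
  moreover have "restr a (S - {u}) = restr x (S - {u}) \<and> restr a (V - S - {v}) = restr x (V - S - {v})
      \<longleftrightarrow> restr a rest = x"
    using assms S_subset u_in v_notin unfolding rest_def by (auto simp: restr_def basis_def fun_eq_iff)
  ultimately show ?thesis
    unfolding kraus_prod_party proj_kraus_joint_def proj_kraus_def part_def by auto
qed

lemma corr_orthonormal:
  "(\<Sum>b\<in>UNIV. alice_corr x (b Alice) \<alpha> * bob_corr x (b Bob) \<alpha>2 *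
      cnj (alice_corr x (b Alice) \<alpha>' * bob_corr x (b Bob) \<alpha>2')) =
    (if \<alpha> = \<alpha>' \<and> \<alpha>2 = \<alpha>2' then 1 else 0)"
proof -
  have "((-1::complex) ^ k) * (-1) ^ k = 1" for k
    by (simp add: power_mult_distrib[symmetric])
  then show ?thesis
    unfolding sum_party_basis party_bits_apply alice_corr_def bob_corr_def
    by (cases \<alpha>; cases \<alpha>'; cases \<alpha>2; cases \<alpha>2') (simp_all add: power_add algebra_simps sqrt2_sq)
qed

lemma eq_iff_restr_rest:
  assumes "a \<in> basis V" "a' \<in> basis V"
  shows "a = a' \<longleftrightarrow> restr a rest = restr a' rest \<and> a u = a' u \<and> a v = a' v"
proof
  assume h: "restr a rest = restr a' rest \<and> a u = a' u \<and> a v = a' v"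
  show "a = a'"
  proof (rule ext)
    fix z
    show "a z = a' z"
    proof (cases "z \<in> rest")
      case True
      then show ?thesis using h by (metis restr_def)
    next
      case False
      then show ?thesis using h assms by (auto simp: basis_def rest_def)
    qed
  qed
qed simp

lemma proj_kraus_complete:
  assumes "a \<in> basis V" "a' \<in> basis V"
  shows "(\<Sum>x\<in>basis rest. \<Sum>b\<in>UNIV. proj_kraus_joint x b a * cnj (proj_kraus_joint x b a')) =
    (if a = a' then 1 else 0)"
proof -
  have "(\<Sum>x\<in>basis rest. \<Sum>b\<in>UNIV. proj_kraus_joint x b a * cnj (proj_kraus_joint x b a')) =
     (\<Sum>x\<in>basis rest. if x = restr a rest then (if restr a' rest = x then
         (\<Sum>b\<in>UNIV. alice_corr x (b Alice) (a u) * bob_corr x (b Bob) (a v) *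
            cnj (alice_corr x (b Alice) (a' u) * bob_corr x (b Bob) (a' v)))
       else 0) else 0)"
    unfolding proj_kraus_joint_def by (rule sum.cong[OF refl]) auto
  also have "\<dots> = (if restr a' rest = restr a rest then
      (\<Sum>b\<in>UNIV. alice_corr (restr a rest) (b Alice) (a u) * bob_corr (restr a rest) (b Bob) (a v) *
         cnj (alice_corr (restr a rest) (b Alice) (a' u) * bob_corr (restr a rest) (b Bob) (a' v)))
      else 0)"
    using finite_basis[OF finite_rest] restr_in_basis[of a rest] by (simp add: sum.delta')
  also have "\<dots> = (if a = a' then 1 else 0)"
    unfolding corr_orthonormal eq_iff_restr_rest[OF assms] by auto
  finally show ?thesis .
qed

lemma trace_bell_proj: "trace UNIV (bell_proj \<sigma>) = trace V \<sigma>"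
proof -
  have "trace UNIV (bell_proj \<sigma>) = (\<Sum>b\<in>basis UNIV. \<Sum>x\<in>basis rest. \<Sum>a\<in>basis V. \<Sum>a'\<in>basis V.
      proj_kraus_joint x b a * \<sigma> a a' * cnj (proj_kraus_joint x b a'))"
    unfolding trace_def bell_proj_def kraus_map_def sandwich_def
    by (rule sum.cong[OF refl], rule sum.cong[OF refl]) (simp add: kraus_prod_proj_kraus)
  also have "\<dots> = (\<Sum>a\<in>basis V. \<Sum>a'\<in>basis V. \<Sum>b\<in>basis UNIV. \<Sum>x\<in>basis rest.
      proj_kraus_joint x b a * \<sigma> a a' * cnj (proj_kraus_joint x b a'))"
    by (rule sum_swap_pair_pair)
  also have "\<dots> = (\<Sum>a\<in>basis V. \<Sum>a'\<in>basis V. \<sigma> a a' *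
      (\<Sum>x\<in>basis rest. \<Sum>b\<in>basis UNIV. proj_kraus_joint x b a * cnj (proj_kraus_joint x b a')))"
    unfolding sum_distrib_left
    by (rule sum.cong[OF refl], rule sum.cong[OF refl], subst sum.swap, rule sum.cong[OF refl],
        rule sum.cong[OF refl]) (simp add: mult_ac)
  also have "\<dots> = (\<Sum>a\<in>basis V. \<Sum>a'\<in>basis V. \<sigma> a a' * (if a = a' then 1 else 0))"
    by (rule sum.cong[OF refl], rule sum.cong[OF refl]) (simp add: proj_kraus_complete)
  also have "\<dots> = trace V \<sigma>"
    unfolding trace_def using finite_basis[OF finite] by (simp add: if_distrib sum.delta cong: if_cong)
  finally show ?thesis .
qed

lemma bell_overlap:
  "(\<Sum>b\<in>UNIV. cnj (alice_corr x (b Alice) \<alpha> * bob_corr x (b Bob) \<alpha>2) * bell b) =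
    (-1) ^ (card (edges_in V E x) + (if \<alpha> then nbr_count V E u x else 0)
      + (if \<alpha>2 then nbr_count V E v x else 0) + (if \<alpha> \<and> \<alpha>2 then 1 else 0)) / 2"
  unfolding sum_party_basis party_bits_apply alice_corr_def bob_corr_def bell_def
  by (cases \<alpha>; cases \<alpha>2) (simp_all add: power_add algebra_simps sqrt2_sq)

lemma graph_state_eq_sum_proj:
  assumes a: "a \<in> basis V"
  shows "graph_state V E a = complex_of_real (2 / sqrt (2 ^ card V)) *
    (\<Sum>x\<in>basis rest. \<Sum>b\<in>UNIV. cnj (proj_kraus_joint x b a) * bell b)"
proof -
  have "(\<Sum>x\<in>basis rest. \<Sum>b\<in>UNIV. cnj (proj_kraus_joint x b a) * bell b) =
     (\<Sum>x\<in>basis rest. if x = restr a rest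
        then (\<Sum>b\<in>UNIV. cnj (alice_corr x (b Alice) (a u) * bob_corr x (b Bob) (a v)) * bell b) else 0)"
    unfolding proj_kraus_joint_def by (rule sum.cong[OF refl]) auto
  also have "\<dots> = (\<Sum>b\<in>UNIV. cnj (alice_corr (restr a rest) (b Alice) (a u) *
      bob_corr (restr a rest) (b Bob) (a v)) * bell b)"
    using finite_basis[OF finite_rest] restr_in_basis[of a rest] by (simp add: sum.delta')
  also have "\<dots> = (-1) ^ card (edges_in V E a) / 2"
    unfolding bell_overlap card_edges_in_split[OF simple finite u_in_V v_in u_neq_v edge a] rest_def ..
  finally show ?thesis
    using a by (simp add: graph_state_def edges_in_def mult.commute)
qed

lemma graph_state_normalization: "(2 / sqrt (2 ^ card V)) ^ 2 * real (card (basis rest)) = 1"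
proof -
  have "card V \<ge> 2"
    using u_in_V v_in u_neq_v finite by (metis card_2_iff card_mono empty_subsetI insert_subset)
  then obtain k where k: "card V = k + 2" using le_Suc_ex by (metis add.commute)
  have "real (card (basis rest)) = 2 ^ k"
    using card_basis[OF finite_rest] card_rest k by simp
  moreover have "(2 / sqrt (2 ^ card V)) ^ 2 = (2::real) ^ 2 / 2 ^ card V"
    by (simp add: power_divide)
  ultimately show ?thesis
    unfolding k by (simp add: power_add)
qed

lemma fidelity_bell_proj:
  assumes "psd V \<sigma>"
  shows "fidelity V (graph_state V E) \<sigma> \<le> fidelity UNIV bell (bell_proj \<sigma>)"
proof -
  let ?\<phi> = "\<lambda>x a. \<Sum>b\<in>UNIV. cnj (proj_kraus_joint x b a) * bell b"
  let ?c = "2 / sqrt (2 ^ card V)"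
  have "quad UNIV (bell_proj \<sigma>) bell = (\<Sum>x\<in>basis rest. quad V \<sigma> (?\<phi> x))"
    unfolding bell_proj_def kraus_map_def sesq_sum_op
    by (rule sum.cong[OF refl], subst quad_sandwich, rule sesq_cong)
      (simp_all add: kraus_prod_proj_kraus)
  then have fid_bell: "fidelity UNIV bell (bell_proj \<sigma>) = (\<Sum>x\<in>basis rest. Re (quad V \<sigma> (?\<phi> x)))"
    unfolding fidelity_def sesq_def by (simp add: Re_sum)
  have "quad V \<sigma> (graph_state V E) = quad V \<sigma> (\<lambda>a. complex_of_real ?c * (\<Sum>x\<in>basis rest. ?\<phi> x a))"
    by (rule sesq_cong) (simp_all only: graph_state_eq_sum_proj)
  also have "\<dots> = complex_of_real (?c ^ 2) * quad V \<sigma> (\<lambda>a. \<Sum>x\<in>basis rest. ?\<phi> x a)"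
  proof -
    have "cnj (complex_of_real ?c) * complex_of_real ?c = complex_of_real (?c ^ 2)"
      by (simp only: complex_cnj_complex_of_real of_real_mult power2_eq_square)
    then show ?thesis unfolding quad_scale by simp
  qed
  finally have "fidelity V (graph_state V E) \<sigma> = ?c ^ 2 * Re (quad V \<sigma> (\<lambda>a. \<Sum>x\<in>basis rest. ?\<phi> x a))"
    unfolding fidelity_def sesq_def by simp
  also have "\<dots> \<le> ?c ^ 2 * (real (card (basis rest)) * (\<Sum>x\<in>basis rest. Re (quad V \<sigma> (?\<phi> x))))"
    by (intro mult_left_mono quad_sum_le[OF assms]) simp
  also have "\<dots> = fidelity UNIV bell (bell_proj \<sigma>)"
    unfolding fid_bell mult.assoc[symmetric] graph_state_normalization by simp
  finally show ?thesis .
qed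

lemma separable_map_bell_proj: "separable_map (part V S) (\<lambda>p. {p}) bell_proj"
  using separable_map_kraus_map[of "basis rest" "part V S" "\<lambda>p. {p}" proj_kraus]
  unfolding bell_proj_def UN_part[OF S_subset] by (simp add: finite_basis finite_rest)

lemma slocc_converts_bell_proj:
  fixes In :: "party \<Rightarrow> 'q set"
  assumes conv: "slocc_converts UNIV In (part V S) \<rho> \<sigma>"
  shows "slocc_converts UNIV In (\<lambda>p. {p}) \<rho> (bell_proj \<sigma>)"
proof -
  have "trace UNIV (bell_proj \<sigma>) = 1"
    using slocc_converts_trace[OF conv] unfolding trace_bell_proj UN_part[OF S_subset] .
  then have "slocc_converts UNIV (part V S) (\<lambda>p. {p}) \<sigma> (bell_proj \<sigma>)"
    unfolding slocc_converts_iff_separable_map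
    using separable_map_bell_proj finite_part[OF S_subset finite] part_disjoint[OF S_subset]
    by (intro conjI exI[of _ bell_proj]) auto
  moreover obtain \<Psi> t where "separable_map In (part V S) \<Psi>" "t \<noteq> 0"
    "\<And>a a'. a \<in> basis V \<Longrightarrow> a' \<in> basis V \<Longrightarrow> \<Psi> \<rho> a a' = t * \<sigma> a a'"
    using slocc_converts_separable_mapE[OF conv] unfolding UN_part[OF S_subset] by blast
  moreover have "\<forall>p. finite (In p)" "\<forall>p p'. p \<noteq> p' \<longrightarrow> In p \<inter> In p' = {}"
    using conv unfolding slocc_converts_iff_separable_map by auto
  ultimately show ?thesis
    using slocc_converts_trans_scaled UN_part[OF S_subset] by metis
qed

end

lemma psd_copies_noisy_graph_state:
  assumes "\<forall>j\<in>basis V. lam j \<ge> 0" "finite V"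
  shows "psd ({..<n} \<times> V) (copies n V (noisy_graph_state V E lam))"
proof (rule psd_mixture[where J = "PiE {..<n} (\<lambda>_. basis V)" and w = "\<lambda>J. \<Prod>c<n. lam (J c)"
      and f = "\<lambda>J a. \<Prod>c<n. zgraph_state V E (J c) (slice c a)"])
  show "0 \<le> (\<Prod>c<n. lam (J c))" if "J \<in> PiE {..<n} (\<lambda>_. basis V)" for J
    using assms(1) that by (auto intro!: prod_nonneg)
  fix a b assume "a \<in> basis ({..<n} \<times> V)" "b \<in> basis ({..<n} \<times> V)"
  then have "copies n V (noisy_graph_state V E lam) a b = (\<Prod>c<n. \<Sum>j\<in>basis V.
      complex_of_real (lam j) * zgraph_state V E j (slice c a) * cnj (zgraph_state V E j (slice c b)))"
    by (simp add: copies_def noisy_graph_state_def slice_def)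
  also have "\<dots> = (\<Sum>J\<in>PiE {..<n} (\<lambda>_. basis V). \<Prod>c<n. complex_of_real (lam (J c)) *
      zgraph_state V E (J c) (slice c a) * cnj (zgraph_state V E (J c) (slice c b)))"
    using assms(2) by (intro prod_sum_PiE) (auto simp: finite_basis)
  finally show "copies n V (noisy_graph_state V E lam) a b = (\<Sum>J\<in>PiE {..<n} (\<lambda>_. basis V).
      complex_of_real (\<Prod>c<n. lam (J c)) * (\<Prod>c<n. zgraph_state V E (J c) (slice c a)) *
      cnj (\<Prod>c<n. zgraph_state V E (J c) (slice c b)))"
    by (simp add: prod.distrib cnj_prod)
qed

lemma (in cut_edge) purifiable_bell:
  assumes conv: "slocc_converts UNIV (\<lambda>p. {..<m} \<times> {p}) (part V S) (copies m UNIV \<rho>2) \<rho>"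
    and psd: "\<And>n. psd ({..<n} \<times> V) (copies n V \<rho>)"
    and "purifiable V \<rho> (graph_state V E)"
  shows "purifiable UNIV \<rho>2 bell"
  unfolding purifiable_def
proof (intro allI impI)
  fix \<epsilon> :: real assume "\<epsilon> > 0"
  then obtain n \<sigma> where conv_n: "slocc_converts V (\<lambda>q. {..<n} \<times> {q}) (\<lambda>q. {q}) (copies n V \<rho>) \<sigma>"
    and fid: "fidelity V (graph_state V E) \<sigma> \<ge> 1 - \<epsilon>"
    using assms(3) unfolding purifiable_def by blast
  have "slocc_converts UNIV (\<lambda>p. {..<n * m} \<times> {p}) (part V S) (copies (n * m) UNIV \<rho>2) \<sigma>"
    using slocc_converts_copies_trans[OF conv] conv_n unfolding UN_part[OF S_subset] .
  then have "slocc_converts UNIV (\<lambda>p. {..<n * m} \<times> {p}) (\<lambda>p. {p}) (copies (n * m) UNIV \<rho>2) (bell_proj \<sigma>)"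
    by (rule slocc_converts_bell_proj)
  moreover have "psd V \<sigma>"
    using slocc_converts_psd[OF conv_n] psd by (simp add: UN_times_singleton)
  then have "1 - \<epsilon> \<le> fidelity UNIV bell (bell_proj \<sigma>)"
    using fidelity_bell_proj fid by (meson order.trans)
  ultimately show "\<exists>n \<sigma>. slocc_converts UNIV (\<lambda>q. {..<n} \<times> {q}) (\<lambda>q. {q}) (copies n UNIV \<rho>2) \<sigma> \<and>
      1 - \<epsilon> \<le> fidelity UNIV bell \<sigma>"
    by blast
qed

theorem theorem1:
  fixes N :: nat and E :: "nat \<Rightarrow> nat \<Rightarrow> bool" and S :: "nat set"
    and lam :: "(nat \<Rightarrow> bool) \<Rightarrow> real" and \<rho>2 :: "party qop"
  assumes "N \<ge> 2"
    and "simple_graph {..<N} E"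
    and "graph_connected {..<N} E"
    and "S \<subseteq> {..<N}" and "S \<noteq> {}" and "S \<noteq> {..<N}"
    and "density UNIV \<rho>2"
    and "\<forall>j\<in>basis {..<N}. lam j \<ge> 0"
    and "(\<Sum>j\<in>basis {..<N}. lam j) = 1"
    and "\<exists>m. slocc_converts (UNIV :: party set) (\<lambda>p. {..<m} \<times> {p})
              (\<lambda>p. if p = Alice then S else {..<N} - S)
              (copies m UNIV \<rho>2) (noisy_graph_state {..<N} E lam)"
    and "\<not> purifiable UNIV \<rho>2 bell"
  shows "\<not> purifiable {..<N} (noisy_graph_state {..<N} E lam) (graph_state {..<N} E)"
proof
  define V where "V = {..<N}"
  assume "purifiable V (noisy_graph_state V E lam) (graph_state V E)"
  obtain u v where "u \<in> S" "v \<in> V" "v \<notin> S" "E u v"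
    using cut_edge_exists assms(2-6) unfolding V_def by metis
  then interpret cut_edge V E S u v
    using assms(2,4) by unfold_locales (auto simp: V_def)
  obtain m where "slocc_converts UNIV (\<lambda>p. {..<m} \<times> {p}) (part V S) (copies m UNIV \<rho>2)
      (noisy_graph_state V E lam)"
    using assms(10) unfolding V_def part_def by (auto cong: if_cong)
  then have "purifiable UNIV \<rho>2 bell"
    using purifiable_bell psd_copies_noisy_graph_state[OF assms(8)[folded V_def] finite]
      \<open>purifiable V _ _\<close> by blast
  with assms(11) show False by contradiction
qed

end
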